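(* Every real algebraic number of degree $2$ is the limit value $\lim_{\lambda\to0}v_\lambda$ of some $2\times2$ absorbing game whose data $g,q,w$ are all rational. *)

theory Defs
  imports "HOL-Analysis.Analysis" "HOL-Computational_Algebra.Computational_Algebra"
begin

definition mixed :: "('a::finite \<Rightarrow> real) set" where
  "mixed = {x. (\<forall>i. 0 \<le> x i) \<and> sum x UNIV = 1}"

definition payoff :: "('i::finite \<Rightarrow> 'j::finite \<Rightarrow> real) \<Rightarrow> ('i \<Rightarrow> real) \<Rightarrow> ('j \<Rightarrow> real) \<Rightarrow> real" where
  "payoff A x y = (\<Sum>i\<in>UNIV. \<Sum>j\<in>UNIV. x i * y j * A i j)"

text \<open>Value of the matrix game A (maxmin in mixed strategies; equals the minmax by von Neumann).\<close>
definition val :: "('i::finite \<Rightarrow> 'j::finite \<Rightarrow> real) \<Rightarrow> real" where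
  "val A = (SUP x\<in>mixed. INF y\<in>mixed. payoff A x y)"

text \<open>Shapley operator of the absorbing game (g, q, w): stage payoff g, absorption
  probability q, absorbing payoff w, discount factor lam.\<close>
definition shapley_op :: "('i::finite \<Rightarrow> 'j::finite \<Rightarrow> real) \<Rightarrow> ('i \<Rightarrow> 'j \<Rightarrow> real) \<Rightarrow>
    ('i \<Rightarrow> 'j \<Rightarrow> real) \<Rightarrow> real \<Rightarrow> real \<Rightarrow> real" where
  "shapley_op g q w lam v =
     val (\<lambda>i j. lam * g i j + (1 - lam) * (q i j * w i j + (1 - q i j) * v))"

definition disc_value :: "('i::finite \<Rightarrow> 'j::finite \<Rightarrow> real) \<Rightarrow> ('i \<Rightarrow> 'j \<Rightarrow> real) \<Rightarrow>
    ('i \<Rightarrow> 'j \<Rightarrow> real) \<Rightarrow> real \<Rightarrow> real" where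
  "disc_value g q w lam = (THE v. v = shapley_op g q w lam v)"

definition algebraic_deg2 :: "real \<Rightarrow> bool" where
  "algebraic_deg2 z \<longleftrightarrow> (\<exists>p :: rat poly. irreducible p \<and> degree p = 2 \<and>
      poly (map_poly of_rat p) z = 0)"

end

theory Submission
  imports Defs
begin

(* Write z as an irrational root of z^2 + p z + r with p, r rational and pick rationals u, h with
   z strictly between them. In the game below only the cell (True, True) is non-absorbing, with
   probability beta of continuing; at v = z its Shapley matrix is
   [[lam u + (1 - lam) c, lam h + (1 - lam) u], [u, h]] with c = a + beta z, where the rationals
   beta and a are chosen so that z (c + h - 2 u) = c h - u^2. For small lam this matrix has no
   saddle point, and the classical 2x2 formula gives the value (c h - u^2) / (c + h - 2 u) = z,
   because the factors (1 - lam) cancel. As the Shapley operator is a (1 - lam)-contraction,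
   v_lam = z for all small lam. The irrational number c is harmless: it only arises from the
   continuation payoff beta v. *)

lemma mixed_nonempty: "(mixed :: ('a::finite \<Rightarrow> real) set) \<noteq> {}"
proof -
  have "(\<lambda>i. if i = a then 1 else 0 :: real) \<in> mixed" for a :: 'a
    by (simp add: mixed_def)
  then show ?thesis by blast
qed

lemma mixed_le_one:
  assumes "x \<in> mixed"
  shows "x i \<le> 1"
proof -
  have "x i \<le> sum x UNIV"
    using assms by (intro member_le_sum) (auto simp: mixed_def)
  then show ?thesis
    using assms by (simp add: mixed_def)
qed

lemma payoff_abs_le:
  assumes "x \<in> mixed" "y \<in> mixed"
  shows "\<bar>payoff A x y\<bar> \<le> (\<Sum>i\<in>UNIV. \<Sum>j\<in>UNIV. \<bar>A i j\<bar>)"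
proof -
  have "\<bar>payoff A x y\<bar> \<le> (\<Sum>i\<in>UNIV. \<Sum>j\<in>UNIV. \<bar>x i * y j * A i j\<bar>)"
    unfolding payoff_def by (intro order_trans[OF sum_abs] sum_mono sum_abs)
  also have "\<dots> \<le> (\<Sum>i\<in>UNIV. \<Sum>j\<in>UNIV. \<bar>A i j\<bar>)"
  proof (intro sum_mono)
    fix i j
    have "0 \<le> x i" "0 \<le> y j"
      using assms by (auto simp: mixed_def)
    moreover have "x i * y j \<le> 1"
      using assms by (intro mult_le_one mixed_le_one) (auto simp: mixed_def)
    ultimately show "\<bar>x i * y j * A i j\<bar> \<le> \<bar>A i j\<bar>"
      by (simp add: abs_mult mult_left_le_one_le)
  qed
  finally show ?thesis .
qed

lemma bdd_below_payoff:
  fixes A :: "'i::finite \<Rightarrow> 'j::finite \<Rightarrow> real"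
  assumes "x \<in> mixed"
  shows "bdd_below (payoff A x ` mixed)"
proof (rule bdd_belowI2[where m = "- (\<Sum>i\<in>UNIV. \<Sum>j\<in>UNIV. \<bar>A i j\<bar>)"])
  fix y :: "'j \<Rightarrow> real" assume y: "y \<in> mixed"
  show "- (\<Sum>i\<in>UNIV. \<Sum>j\<in>UNIV. \<bar>A i j\<bar>) \<le> payoff A x y"
    using payoff_abs_le[OF assms y, where A = A] by (simp add: abs_le_iff)
qed

lemma bdd_above_maxmin:
  fixes A :: "'i::finite \<Rightarrow> 'j::finite \<Rightarrow> real"
  shows "bdd_above ((\<lambda>x. INF y\<in>mixed. payoff A x y) ` mixed)"
proof (rule bdd_aboveI2[where M = "\<Sum>i\<in>UNIV. \<Sum>j\<in>UNIV. \<bar>A i j\<bar>"])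
  fix x :: "'i \<Rightarrow> real" assume x: "x \<in> mixed"
  obtain y :: "'j \<Rightarrow> real" where y: "y \<in> mixed"
    using mixed_nonempty by blast
  have "(INF y\<in>mixed. payoff A x y) \<le> payoff A x y"
    by (rule cINF_lower[OF bdd_below_payoff[OF x] y])
  also have "\<dots> \<le> (\<Sum>i\<in>UNIV. \<Sum>j\<in>UNIV. \<bar>A i j\<bar>)"
    using payoff_abs_le[OF x y, where A = A] by simp
  finally show "(INF y\<in>mixed. payoff A x y) \<le> (\<Sum>i\<in>UNIV. \<Sum>j\<in>UNIV. \<bar>A i j\<bar>)" .
qed

lemma val_ge:
  assumes "x0 \<in> mixed" "\<And>y. y \<in> mixed \<Longrightarrow> v \<le> payoff A x0 y"
  shows "v \<le> val A"
proof -
  have "v \<le> (INF y\<in>mixed. payoff A x0 y)"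
    using assms(2) mixed_nonempty by (intro cINF_greatest) auto
  also have "\<dots> \<le> val A"
    unfolding val_def by (rule cSUP_upper[OF assms(1) bdd_above_maxmin])
  finally show ?thesis .
qed

lemma val_le:
  fixes A :: "'i::finite \<Rightarrow> 'j::finite \<Rightarrow> real"
  assumes "y0 \<in> mixed" "\<And>x. x \<in> mixed \<Longrightarrow> payoff A x y0 \<le> v"
  shows "val A \<le> v"
  unfolding val_def
proof (rule cSUP_least[OF mixed_nonempty])
  fix x :: "'i \<Rightarrow> real" assume x: "x \<in> mixed"
  have "(INF y\<in>mixed. payoff A x y) \<le> payoff A x y0"
    by (rule cINF_lower[OF bdd_below_payoff[OF x] assms(1)])
  also have "\<dots> \<le> v"
    by (rule assms(2)[OF x])
  finally show "(INF y\<in>mixed. payoff A x y) \<le> v" .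
qed

lemma payoff_le_shift:
  assumes "x \<in> mixed" "y \<in> mixed" "\<And>i j. A i j \<le> B i j + c"
  shows "payoff A x y \<le> payoff B x y + c"
proof -
  have "payoff A x y \<le> (\<Sum>i\<in>UNIV. \<Sum>j\<in>UNIV. x i * y j * (B i j + c))"
    unfolding payoff_def using assms by (intro sum_mono mult_left_mono) (auto simp: mixed_def)
  also have "\<dots> = payoff B x y + (\<Sum>i\<in>UNIV. \<Sum>j\<in>UNIV. c * (x i * y j))"
    by (simp add: payoff_def distrib_left sum.distrib mult_ac)
  also have "\<dots> = payoff B x y + c * (sum x UNIV * sum y UNIV)"
    by (subst sum_product) (simp add: sum_distrib_left)
  also have "\<dots> = payoff B x y + c"
    using assms by (simp add: mixed_def)
  finally show ?thesis .
qed

lemma val_le_shift: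
  fixes A B :: "'i::finite \<Rightarrow> 'j::finite \<Rightarrow> real"
  assumes "\<And>i j. A i j \<le> B i j + c"
  shows "val A \<le> val B + c"
proof -
  have "(INF y\<in>mixed. payoff A x y) \<le> val B + c" if x: "x \<in> mixed" for x :: "'i \<Rightarrow> real"
  proof -
    have "(INF y\<in>mixed. payoff A x y) - c \<le> (INF y\<in>mixed. payoff B x y)"
    proof (rule cINF_greatest[OF mixed_nonempty])
      fix y :: "'j \<Rightarrow> real" assume y: "y \<in> mixed"
      have "(INF y\<in>mixed. payoff A x y) \<le> payoff A x y"
        by (rule cINF_lower[OF bdd_below_payoff[OF x] y])
      then show "(INF y\<in>mixed. payoff A x y) - c \<le> payoff B x y"
        using payoff_le_shift[of x y A B c, OF x y assms] by linarith
    qed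
    also have "\<dots> \<le> val B"
      unfolding val_def by (rule cSUP_upper[OF x bdd_above_maxmin])
    finally show ?thesis by simp
  qed
  then show ?thesis
    unfolding val_def[of A] by (rule cSUP_least[OF mixed_nonempty])
qed

lemma shapley_op_le_shift:
  assumes "\<forall>i j. 0 \<le> q i j \<and> q i j \<le> 1" "lam \<le> 1"
  shows "shapley_op g q w lam v \<le> shapley_op g q w lam v' + (1 - lam) * \<bar>v - v'\<bar>"
  unfolding shapley_op_def
proof (rule val_le_shift)
  fix i j
  have "0 \<le> 1 - q i j" "1 - q i j \<le> 1"
    using assms(1) by auto
  then have "(1 - q i j) * (v - v') \<le> \<bar>v - v'\<bar>"
    by (metis abs_ge_self abs_ge_zero mult_left_le_one_le mult_left_mono order_trans)
  then have "(1 - lam) * ((1 - q i j) * (v - v')) \<le> (1 - lam) * \<bar>v - v'\<bar>"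
    using assms(2) by (intro mult_left_mono) auto
  then show "lam * g i j + (1 - lam) * (q i j * w i j + (1 - q i j) * v)
      \<le> lam * g i j + (1 - lam) * (q i j * w i j + (1 - q i j) * v') + (1 - lam) * \<bar>v - v'\<bar>"
    by (simp add: algebra_simps)
qed

lemma disc_value_eqI:
  assumes q: "\<forall>i j. 0 \<le> q i j \<and> q i j \<le> 1" and lam: "0 < lam" "lam \<le> 1"
    and fixpoint: "shapley_op g q w lam v = v"
  shows "disc_value g q w lam = v"
  unfolding disc_value_def
proof (rule the_equality)
  show "v = shapley_op g q w lam v"
    using fixpoint by simp
next
  fix v' assume v': "v' = shapley_op g q w lam v'"
  have "v' - v \<le> (1 - lam) * \<bar>v' - v\<bar>"
    using shapley_op_le_shift[OF q lam(2), of g w v' v] v' fixpoint by simp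
  moreover have "v - v' \<le> (1 - lam) * \<bar>v' - v\<bar>"
    using shapley_op_le_shift[OF q lam(2), of g w v v'] v' fixpoint by (simp add: abs_minus_commute)
  ultimately have "\<bar>v' - v\<bar> \<le> (1 - lam) * \<bar>v' - v\<bar>"
    by (simp add: abs_le_iff)
  then have "lam * \<bar>v' - v\<bar> \<le> 0"
    by (simp add: algebra_simps)
  then show "v' = v"
    using lam(1) by (simp add: mult_le_0_iff)
qed

lemma mixed_bool_iff:
  "(x :: bool \<Rightarrow> real) \<in> mixed \<longleftrightarrow> 0 \<le> x True \<and> 0 \<le> x False \<and> x True + x False = 1"
  by (auto simp: mixed_def UNIV_bool all_bool_eq)

lemma payoff_bool:
  "payoff (A :: bool \<Rightarrow> bool \<Rightarrow> real) x y =
     x True * y True * A True True + x True * y False * A True False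
   + x False * y True * A False True + x False * y False * A False False"
  by (simp add: payoff_def UNIV_bool)

lemma val_2x2_no_saddle:
  fixes a b c d :: real
  assumes "0 < (a - b) * (d - c)" "0 < (a - c) * (d - b)"
  shows "val (\<lambda>i j. if i then if j then a else b else if j then c else d)
           = (a * d - b * c) / (a + d - b - c)"
proof -
  let ?A = "\<lambda>i j. if i then if j then a else b else if j then c else d"
  define S where "S = a + d - b - c"
  define v where "v = (a * d - b * c) / S"
  have weight_pos: "0 < s / (s + t)" "0 < t / (s + t)" if "0 < s * t" for s t :: real
    using that by (auto simp: zero_less_mult_iff zero_less_divide_iff)
  have S: "S = (a - b) + (d - c)" "S = (a - c) + (d - b)"
    by (simp_all add: S_def)
  have "S \<noteq> 0"
    using assms(1) by (auto simp: S(1) zero_less_mult_iff)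
  define x where "x = (\<lambda>i. if i then (d - c) / S else (a - b) / S)"
  define y where "y = (\<lambda>j. if j then (d - b) / S else (a - c) / S)"
  have "0 < x True" "0 < x False"
    using weight_pos[OF assms(1)] by (simp_all add: x_def S(1))
  moreover have "x True + x False = 1"
    using \<open>S \<noteq> 0\<close> by (simp add: x_def S(1) add_divide_distrib[symmetric])
  ultimately have x: "x \<in> mixed"
    by (simp add: mixed_bool_iff)
  have "0 < y True" "0 < y False"
    using weight_pos[OF assms(2)] by (simp_all add: y_def S(2))
  moreover have "y True + y False = 1"
    using \<open>S \<noteq> 0\<close> by (simp add: y_def S(2) add_divide_distrib[symmetric])
  ultimately have y: "y \<in> mixed"
    by (simp add: mixed_bool_iff)
  have quotient: "p / S * e + q / S * f = v" if "p * e + q * f = a * d - b * c" for p q e f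
    using that by (simp add: v_def add_divide_distrib[symmetric])
  have x_equalizes: "x True * a + x False * c = v" "x True * b + x False * d = v"
    unfolding x_def if_True if_False by (rule quotient, simp add: algebra_simps)+
  have y_equalizes: "y True * a + y False * b = v" "y True * c + y False * d = v"
    unfolding y_def if_True if_False by (rule quotient, simp add: algebra_simps)+
  have x_guarantees: "v \<le> payoff ?A x y'" if "y' \<in> mixed" for y'
  proof -
    have "payoff ?A x y' = y' True * (x True * a + x False * c) + y' False * (x True * b + x False * d)"
      by (simp add: payoff_bool algebra_simps)
    also have "\<dots> = (y' True + y' False) * v"
      by (simp only: x_equalizes distrib_right)
    finally show ?thesis
      using that by (simp add: mixed_bool_iff)
  qed
  have y_guarantees: "payoff ?A x' y \<le> v" if "x' \<in> mixed" for x'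
  proof -
    have "payoff ?A x' y = x' True * (y True * a + y False * b) + x' False * (y True * c + y False * d)"
      by (simp add: payoff_bool algebra_simps)
    also have "\<dots> = (x' True + x' False) * v"
      by (simp only: y_equalizes distrib_right)
    finally show ?thesis
      using that by (simp add: mixed_bool_iff)
  qed
  have "val ?A \<le> v"
    by (rule val_le[OF y y_guarantees])
  moreover have "v \<le> val ?A"
    by (rule val_ge[OF x x_guarantees])
  ultimately have "val ?A = v"
    by (rule antisym)
  then show ?thesis
    by (simp only: v_def S_def)
qed

lemma val_quadratic_game_matrix:
  fixes u h c z lam :: real
  assumes lam: "0 < lam" "lam < 1"
    and first_row: "0 < (lam * (u - h) + (1 - lam) * (c - u)) * (h - u)"
    and no_saddle: "0 < (c - u) * (h - u)"
    and root: "z * (c + h - 2 * u) = c * h - u^2"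
  shows "val (\<lambda>i j. if i then if j then lam * u + (1 - lam) * c else lam * h + (1 - lam) * u
                   else if j then u else h) = z"
proof -
  have "c + h - 2 * u \<noteq> 0"
  proof
    assume degenerate: "c + h - 2 * u = 0"
    have "(c - u) * (h - u) = (c * h - u^2) - u * (c + h - 2 * u)"
      by (simp add: algebra_simps power2_eq_square)
    also have "\<dots> = 0"
      using root degenerate by simp
    finally show False
      using no_saddle by linarith
  qed
  have "0 < (1 - lam)^2 * ((c - u) * (h - u))"
    using lam no_saddle by simp
  then have "val (\<lambda>i j. if i then if j then lam * u + (1 - lam) * c else lam * h + (1 - lam) * u
                   else if j then u else h)
      = ((lam * u + (1 - lam) * c) * h - (lam * h + (1 - lam) * u) * u)
        / ((lam * u + (1 - lam) * c) + h - (lam * h + (1 - lam) * u) - u)"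
    using first_row by (intro val_2x2_no_saddle) (simp_all add: algebra_simps power2_eq_square)
  also have "\<dots> = ((1 - lam) * (c * h - u^2)) / ((1 - lam) * (c + h - 2 * u))"
    by (simp add: algebra_simps power2_eq_square)
  also have "\<dots> = (c * h - u^2) / (c + h - 2 * u)"
    using lam by (intro mult_divide_mult_cancel_left) simp
  also have "\<dots> = z"
    unfolding root[symmetric] using \<open>c + h - 2 * u \<noteq> 0\<close> by simp
  finally show ?thesis .
qed

lemma disc_value_quadratic_game_eventually:
  fixes u h a \<beta> z :: real
  defines "c \<equiv> a + \<beta> * z"
  assumes \<beta>: "0 < \<beta>" "\<beta> < 1"
    and no_saddle: "0 < (c - u) * (h - u)"
    and root: "z * (c + h - 2 * u) = c * h - u^2"
  shows "\<forall>\<^sub>F lam in at_right 0.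
           disc_value (\<lambda>i j. if j then u else h) (\<lambda>i j. if i \<and> j then 1 - \<beta> else 1)
             (\<lambda>i j. if i then if j then a / (1 - \<beta>) else u else if j then u else h) lam = z"
proof -
  let ?g = "\<lambda>i j. if j then u else h"
  let ?q = "\<lambda>i j. if i \<and> j then 1 - \<beta> else 1"
  let ?w = "\<lambda>i j. if i then if j then a / (1 - \<beta>) else u else if j then u else h"
  have q: "\<forall>i j. 0 \<le> ?q i j \<and> ?q i j \<le> 1"
    using \<beta> by simp
  have "(1 - \<beta>) * (a / (1 - \<beta>)) = a"
    using \<beta> by simp
  then have shapley: "shapley_op ?g ?q ?w lam z
      = val (\<lambda>i j. if i then if j then lam * u + (1 - lam) * c else lam * h + (1 - lam) * u
                     else if j then u else h)" for lam
    unfolding shapley_op_def c_def by (intro arg_cong[where f = val] ext) (simp add: algebra_simps)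
  have "((\<lambda>lam. (lam * (u - h) + (1 - lam) * (c - u)) * (h - u))
          \<longlongrightarrow> (0 * (u - h) + (1 - 0) * (c - u)) * (h - u)) (at_right 0)"
    by (intro tendsto_intros)
  then have "\<forall>\<^sub>F lam in at_right 0. 0 < (lam * (u - h) + (1 - lam) * (c - u)) * (h - u)"
    using no_saddle by (intro order_tendstoD(1)) simp_all
  moreover have "\<forall>\<^sub>F lam in at_right 0. (0::real) < lam"
    by (rule eventually_at_right_less)
  moreover have "\<forall>\<^sub>F lam in at_right 0. lam < (1::real)"
    using eventually_at_right_real[of 0 1] by (simp add: eventually_conj_iff)
  ultimately show ?thesis
  proof eventually_elim
    case (elim lam)
    then show ?case
      using q shapley val_quadratic_game_matrix[OF _ _ _ no_saddle root]
      by (intro disc_value_eqI) simp_all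
  qed
qed

lemma quadratic_game_parameters:
  fixes z p r u h \<beta> a :: real
  assumes \<beta>_def: "\<beta> = (h - u)^2 / (h^2 + p * h + r)"
    and a_def: "a = \<beta> * p + 2 * u - (1 - \<beta>) * h"
    and root: "z^2 + p * z + r = 0"
    and between: "0 < (z - u) * (h - z)"
    and small: "(h - u)^2 < h^2 + p * h + r"
  shows "0 < \<beta>" "\<beta> < 1" "0 < (a + \<beta> * z - u) * (h - u)"
    "z * (a + \<beta> * z + h - 2 * u) = (a + \<beta> * z) * h - u^2"
proof -
  define c where "c = a + \<beta> * z"
  have "h \<noteq> u"
  proof
    assume "h = u"
    then have "(z - u) * (h - z) = - ((z - u)^2)"
      by (simp add: algebra_simps power2_eq_square)
    with between show False
      using zero_le_power2[of "z - u"] by linarith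
  qed
  then have "0 < (h - u)^2"
    by simp
  with small have "0 < h^2 + p * h + r"
    by linarith
  then show "0 < \<beta>" "\<beta> < 1"
    using \<open>0 < (h - u)^2\<close> small by (simp_all only: \<beta>_def divide_pos_pos divide_less_eq_1_pos)
  have "\<beta> * (h^2 + p * h + r) = (h - u)^2"
    using \<open>0 < h^2 + p * h + r\<close> by (simp add: \<beta>_def)
  moreover have "z * (c + h - 2 * u) - (c * h - u^2)
      = \<beta> * (z^2 + p * z + r) + ((h - u)^2 - \<beta> * (h^2 + p * h + r))"
    by (simp add: c_def a_def algebra_simps power2_eq_square)
  ultimately show identity: "z * (a + \<beta> * z + h - 2 * u) = (a + \<beta> * z) * h - u^2"
    using root by (simp add: c_def)
  have "(c - u) * (h - z) - (z - u) * (h - u) = (c * h - u^2) - z * (c + h - 2 * u)"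
    by (simp add: algebra_simps power2_eq_square)
  then have "(c - u) * (h - z) = (z - u) * (h - u)"
    using identity by (simp add: c_def)
  then have "((c - u) * (h - u)) * (h - z)^2 = ((z - u) * (h - z)) * (h - u)^2"
    by (simp add: power2_eq_square)
  also have "\<dots> > 0"
    using between \<open>0 < (h - u)^2\<close> by simp
  finally show "0 < (a + \<beta> * z - u) * (h - u)"
    by (simp add: c_def zero_less_mult_iff)
qed

lemma rational_bracket:
  fixes z p r :: real
  assumes "2 * z + p \<noteq> 0"
  obtains u h where "u \<in> \<rat>" "h \<in> \<rat>" "0 < (z - u) * (h - z)" "(h - u)^2 < h^2 + p * h + r"
proof -
  have upper: "\<exists>u\<in>\<rat>. \<exists>h\<in>\<rat>. 0 < (z - u) * (h - z) \<and> (h - u)^2 < h^2 + p * h + r"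
    if "0 < 2 * z + p" for z p :: real
  proof -
    have "- p / 2 < z"
      using that by linarith
    then obtain u where u: "u \<in> \<rat>" "- p / 2 < u" "u < z"
      using Rats_dense_in_real by blast
    define M where "M = max z ((u^2 - r) / (p + 2 * u))"
    obtain h where h: "h \<in> \<rat>" "M < h"
      using Rats_dense_in_real[of M "M + 1"] by auto
    have "u^2 - r < (p + 2 * u) * h"
      using h u by (simp add: M_def pos_divide_less_eq mult.commute)
    then have "(h - u)^2 < h^2 + p * h + r"
      by (simp add: algebra_simps power2_eq_square)
    moreover have "0 < (z - u) * (h - z)"
      using h u by (simp add: M_def)
    ultimately show ?thesis
      using u h by blast
  qed
  show ?thesis
  proof (cases "0 < 2 * z + p")
    case True
    then show ?thesis
      using upper that by blast
  next
    case False
    then have "0 < 2 * (- z) + (- p)"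
      using assms by linarith
    then obtain u h where "u \<in> \<rat>" "h \<in> \<rat>" "0 < (- z - u) * (h - (- z))"
        "(h - u)^2 < h^2 + (- p) * h + r"
      using upper by blast
    then show ?thesis
      by (intro that[of "- u" "- h"]) (simp_all add: algebra_simps power2_eq_square)
  qed
qed

lemma poly_degree_2:
  fixes P :: "'a::comm_semiring_1 poly"
  assumes "degree P = 2"
  shows "poly P x = coeff P 0 + coeff P 1 * x + coeff P 2 * x^2"
  using assms by (simp add: poly_altdef eval_nat_numeral atMost_Suc algebra_simps)

lemma irreducible_poly_no_root:
  fixes P :: "'a::field poly"
  assumes "irreducible P" "2 \<le> degree P"
  shows "poly P y \<noteq> 0"
proof
  assume "poly P y = 0"
  then obtain k where k: "P = [:- y, 1:] * k"
    by (auto simp: poly_eq_0_iff_dvd elim: dvdE)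
  with assms(2) have "k \<noteq> 0"
    by auto
  then have "degree P = 1 + degree k"
    unfolding k by (subst degree_mult_eq) auto
  with assms(2) \<open>k \<noteq> 0\<close> have "\<not> is_unit k" "\<not> is_unit [:- y, 1:]"
    by (auto simp: is_unit_iff_degree)
  with irreducibleD[OF assms(1) k] show False
    by blast
qed

lemma algebraic_deg2_irrational:
  assumes "algebraic_deg2 z"
  shows "z \<notin> \<rat>"
proof
  assume "z \<in> \<rat>"
  then obtain y where z: "z = of_rat y"
    by (auto elim: Rats_cases)
  obtain P :: "rat poly" where P: "irreducible P" "degree P = 2" "poly (map_poly of_rat P) z = 0"
    using assms unfolding algebraic_deg2_def by blast
  have "poly (map_poly of_rat P) z = of_rat (poly P y)"
    unfolding z using P(2)
    by (simp add: poly_degree_2 degree_map_poly coeff_map_poly of_rat_add of_rat_mult of_rat_power)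
  then have "poly P y = 0"
    using P(3) by simp
  with irreducible_poly_no_root[OF P(1)] P(2) show False
    by simp
qed

lemma algebraic_deg2_monic_root:
  assumes "algebraic_deg2 z"
  obtains p r where "p \<in> \<rat>" "r \<in> \<rat>" "z^2 + p * z + r = 0"
proof -
  obtain P :: "rat poly" where P: "degree P = 2" "poly (map_poly of_rat P) z = 0"
    using assms unfolding algebraic_deg2_def by blast
  have "P \<noteq> 0"
    using P(1) by auto
  define c :: "nat \<Rightarrow> real" where "c i = of_rat (coeff P i)" for i
  have "c 0 + c 1 * z + c 2 * z^2 = 0"
    using P by (simp add: c_def poly_degree_2 degree_map_poly coeff_map_poly)
  moreover have "c 2 \<noteq> 0"
    using leading_coeff_neq_0[OF \<open>P \<noteq> 0\<close>] P(1) by (simp add: c_def)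
  ultimately have "z^2 + (c 1 / c 2) * z + c 0 / c 2 = 0"
    by (simp add: field_simps)
  moreover have "c 1 / c 2 \<in> \<rat>" "c 0 / c 2 \<in> \<rat>"
    by (simp_all add: c_def)
  ultimately show ?thesis
    using that by blast
qed

theorem mainTheorem8:
  fixes z :: real
  assumes "algebraic_deg2 z"
  shows "\<exists>(g :: bool \<Rightarrow> bool \<Rightarrow> real) (q :: bool \<Rightarrow> bool \<Rightarrow> real) (w :: bool \<Rightarrow> bool \<Rightarrow> real).
           (\<forall>i j. g i j \<in> \<rat> \<and> q i j \<in> \<rat> \<and> w i j \<in> \<rat>) \<and>
           (\<forall>i j. 0 \<le> q i j \<and> q i j \<le> 1) \<and>
           ((\<lambda>lam. disc_value g q w lam) \<longlongrightarrow> z) (at_right 0)"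
proof -
  obtain p r where "p \<in> \<rat>" "r \<in> \<rat>" and root: "z^2 + p * z + r = 0"
    using algebraic_deg2_monic_root[OF assms] .
  have "z \<noteq> - p / 2"
    using \<open>p \<in> \<rat>\<close> algebraic_deg2_irrational[OF assms] by auto
  then have "2 * z + p \<noteq> 0"
    by linarith
  then obtain u h where "u \<in> \<rat>" "h \<in> \<rat>"
    and between: "0 < (z - u) * (h - z)" and small: "(h - u)^2 < h^2 + p * h + r"
    by (rule rational_bracket)
  define \<beta> where "\<beta> = (h - u)^2 / (h^2 + p * h + r)"
  define a where "a = \<beta> * p + 2 * u - (1 - \<beta>) * h"
  note parameters = quadratic_game_parameters[OF \<beta>_def a_def root between small]
  have "\<beta> \<in> \<rat>" "a \<in> \<rat>"
    using \<open>p \<in> \<rat>\<close> \<open>r \<in> \<rat>\<close> \<open>u \<in> \<rat>\<close> \<open>h \<in> \<rat>\<close> by (simp_all add: \<beta>_def a_def)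
  moreover have "\<forall>\<^sub>F lam in at_right 0.
      disc_value (\<lambda>i j. if j then u else h) (\<lambda>i j. if i \<and> j then 1 - \<beta> else 1)
        (\<lambda>i j. if i then if j then a / (1 - \<beta>) else u else if j then u else h) lam = z"
    using parameters by (rule disc_value_quadratic_game_eventually)
  ultimately show ?thesis
    using parameters \<open>u \<in> \<rat>\<close> \<open>h \<in> \<rat>\<close>
    by (intro exI conjI allI tendsto_eventually) auto
qed

end
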